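(* Let $n,k$ be positive integers with $n \geq 3(n-k)$ and $n\geq k$, and let $C\in\mathcal{K}_k(n)$. Let $M_{n,k}=\{k+1,k+2,\dots,2n-k\}$. Then exactly $n-k$ chords of $C$ have their start point in $M_{n,k}$, and exactly $n-k$ chords of $C$ have their end point in $M_{n,k}$.
   Context: A linear chord diagram of size $n$ is a partition of $\{1,2,\dots,2n\}$ into blocks of size two, called chords. For a chord $c=\{s_c,e_c\}$ with $s_c<e_c$, $s_c$ is its start point, $e_c$ its end point, and its length is $e_c-s_c$. $\mathcal{K}_k(n)$ is the set of all linear chord diagrams of size $n$ in which every chord has length at least $k$. *)

theory Defs
  imports Main
begin

definition linear_chord_diagram :: "nat \<Rightarrow> nat set set \<Rightarrow> bool" where
  "linear_chord_diagram n C \<longleftrightarrow>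
     (\<forall>c\<in>C. card c = 2) \<and> \<Union>C = {1..2*n} \<and>
     (\<forall>c\<in>C. \<forall>d\<in>C. c \<noteq> d \<longrightarrow> c \<inter> d = {})"

definition start_pt :: "nat set \<Rightarrow> nat" where "start_pt c = Min c"
definition end_pt :: "nat set \<Rightarrow> nat" where "end_pt c = Max c"
definition chord_length :: "nat set \<Rightarrow> nat" where "chord_length c = end_pt c - start_pt c"

definition K :: "nat \<Rightarrow> nat \<Rightarrow> nat set set set" where
  "K k n = {C. linear_chord_diagram n C \<and> (\<forall>c\<in>C. chord_length c \<ge> k)}"

definition M :: "nat \<Rightarrow> nat \<Rightarrow> nat set" where "M n k = {k+1..2*n-k}"

end

theory Submission
  imports Defs
begin

text \<open>Since every chord has length at least k, none of the points 1..k is an end point and none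
  of the points 2n-k+1..2n is a start point. As the chords are disjoint, each of the k points 1..k
  is the start point of exactly one chord, so of the n chords exactly n - k start in M; symmetrically
  for the end points.\<close>

lemma linear_chord_diagram_chord_subset:
  "linear_chord_diagram n C \<Longrightarrow> c \<in> C \<Longrightarrow> c \<subseteq> {1..2*n}"
  unfolding linear_chord_diagram_def by blast

lemma linear_chord_diagram_finite:
  "linear_chord_diagram n C \<Longrightarrow> finite C"
  unfolding linear_chord_diagram_def by (metis finite_UnionD finite_atLeastAtMost)

lemma linear_chord_diagram_chord_eq:
  assumes "linear_chord_diagram n C" "c \<in> C"
  shows "c = {start_pt c, end_pt c}" "start_pt c < end_pt c"
proof -
  obtain x y where "x \<noteq> y" "c = {x, y}"
    using assms by (auto simp: linear_chord_diagram_def card_2_iff)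
  then show "c = {start_pt c, end_pt c}" "start_pt c < end_pt c"
    by (auto simp: start_pt_def end_pt_def min_def max_def)
qed

lemma linear_chord_diagram_card:
  assumes "linear_chord_diagram n C"
  shows "card C = n"
proof -
  have "2 * n = card (\<Union>C)"
    using assms by (simp add: linear_chord_diagram_def)
  also have "\<dots> = (\<Sum>c\<in>C. card c)"
    using assms linear_chord_diagram_chord_subset
    by (intro card_Union_disjoint)
       (auto simp: linear_chord_diagram_def pairwise_def disjnt_def intro: finite_subset)
  also have "\<dots> = 2 * card C"
    using assms by (simp add: linear_chord_diagram_def)
  finally show ?thesis by simp
qed

lemma linear_chord_diagram_chord_unique:
  "linear_chord_diagram n C \<Longrightarrow> c \<in> C \<Longrightarrow> d \<in> C \<Longrightarrow> x \<in> c \<Longrightarrow> x \<in> d \<Longrightarrow> c = d"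
  unfolding linear_chord_diagram_def by blast

lemma linear_chord_diagram_inj_on_start_pt:
  "linear_chord_diagram n C \<Longrightarrow> inj_on start_pt C"
  by (rule inj_onI, rule linear_chord_diagram_chord_unique[where x = "start_pt _"])
     (auto dest: linear_chord_diagram_chord_eq(1))

lemma linear_chord_diagram_inj_on_end_pt:
  "linear_chord_diagram n C \<Longrightarrow> inj_on end_pt C"
  by (rule inj_onI, rule linear_chord_diagram_chord_unique[where x = "end_pt _"])
     (auto dest: linear_chord_diagram_chord_eq(1))

lemma card_chords_start_pt_in:
  assumes C: "linear_chord_diagram n C"
    and S: "S \<subseteq> {1..2*n}" and no_end: "\<And>c. c \<in> C \<Longrightarrow> end_pt c \<notin> S"
  shows "card {c\<in>C. start_pt c \<in> S} = card S"
proof -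
  have "start_pt ` {c\<in>C. start_pt c \<in> S} = S"
  proof (intro equalityI subsetI)
    fix x assume "x \<in> S"
    with S C have "x \<in> \<Union>C" by (auto simp: linear_chord_diagram_def)
    then obtain c where "c \<in> C" "x \<in> c" by blast
    moreover have "x \<noteq> end_pt c" using \<open>x \<in> S\<close> no_end \<open>c \<in> C\<close> by blast
    ultimately have "x = start_pt c"
      using linear_chord_diagram_chord_eq(1)[OF C] by blast
    with \<open>c \<in> C\<close> \<open>x \<in> S\<close> show "x \<in> start_pt ` {c\<in>C. start_pt c \<in> S}" by blast
  qed auto
  moreover have "inj_on start_pt {c\<in>C. start_pt c \<in> S}"
    using linear_chord_diagram_inj_on_start_pt[OF C] by (rule inj_on_subset) blast
  ultimately show ?thesis by (metis card_image)
qed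

lemma card_chords_end_pt_in:
  assumes C: "linear_chord_diagram n C"
    and S: "S \<subseteq> {1..2*n}" and no_start: "\<And>c. c \<in> C \<Longrightarrow> start_pt c \<notin> S"
  shows "card {c\<in>C. end_pt c \<in> S} = card S"
proof -
  have "end_pt ` {c\<in>C. end_pt c \<in> S} = S"
  proof (intro equalityI subsetI)
    fix x assume "x \<in> S"
    with S C have "x \<in> \<Union>C" by (auto simp: linear_chord_diagram_def)
    then obtain c where "c \<in> C" "x \<in> c" by blast
    moreover have "x \<noteq> start_pt c" using \<open>x \<in> S\<close> no_start \<open>c \<in> C\<close> by blast
    ultimately have "x = end_pt c"
      using linear_chord_diagram_chord_eq(1)[OF C] by blast
    with \<open>c \<in> C\<close> \<open>x \<in> S\<close> show "x \<in> end_pt ` {c\<in>C. end_pt c \<in> S}" by blast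
  qed auto
  moreover have "inj_on end_pt {c\<in>C. end_pt c \<in> S}"
    using linear_chord_diagram_inj_on_end_pt[OF C] by (rule inj_on_subset) blast
  ultimately show ?thesis by (metis card_image)
qed

lemma card_filter_eq_diff:
  assumes "finite A"
  shows "card {x\<in>A. P x} = card A - card {x\<in>A. \<not> P x}"
proof -
  have "{x\<in>A. P x} = A - {x\<in>A. \<not> P x}" by blast
  then show ?thesis using assms by (simp add: card_Diff_subset)
qed

lemma K_chord_bounds:
  assumes "C \<in> K k n" "c \<in> C"
  shows "1 \<le> start_pt c" "start_pt c + k \<le> end_pt c" "end_pt c \<le> 2*n"
proof -
  have C: "linear_chord_diagram n C" and "chord_length c \<ge> k"
    using assms by (auto simp: K_def)
  moreover have "start_pt c \<in> c" "end_pt c \<in> c"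
    using linear_chord_diagram_chord_eq(1)[OF C assms(2)] by blast+
  moreover note linear_chord_diagram_chord_subset[OF C assms(2)]
    linear_chord_diagram_chord_eq(2)[OF C assms(2)]
  ultimately show "1 \<le> start_pt c" "start_pt c + k \<le> end_pt c" "end_pt c \<le> 2*n"
    by (auto simp: chord_length_def)
qed

theorem lemma2:
  fixes n k :: nat and C :: "nat set set"
  assumes "n > 0" "k > 0" "n \<ge> 3 * (n - k)" "n \<ge> k" "C \<in> K k n"
  shows "card {c\<in>C. start_pt c \<in> M n k} = n - k \<and> card {c\<in>C. end_pt c \<in> M n k} = n - k"
proof -
  have lcd: "linear_chord_diagram n C" using assms(5) by (simp add: K_def)
  have start_bound: "1 \<le> start_pt c \<and> start_pt c \<le> 2*n - k"
    and end_bound: "k + 1 \<le> end_pt c \<and> end_pt c \<le> 2*n"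
    if "c \<in> C" for c
    using K_chord_bounds[OF assms(5) that] by linarith+
  have starts: "card {c\<in>C. start_pt c \<notin> M n k} = k"
  proof -
    have "{c\<in>C. start_pt c \<notin> M n k} = {c\<in>C. start_pt c \<in> {1..k}}"
      using start_bound by (auto simp: M_def)
    also have "card \<dots> = card {1..k}"
      using assms(4) by (intro card_chords_start_pt_in[OF lcd]) (auto dest: end_bound)
    finally show ?thesis by simp
  qed
  have ends: "card {c\<in>C. end_pt c \<notin> M n k} = k"
  proof -
    have "{c\<in>C. end_pt c \<notin> M n k} = {c\<in>C. end_pt c \<in> {2*n-k+1..2*n}}"
      using end_bound by (auto simp: M_def)
    also have "card \<dots> = card {2*n-k+1..2*n}"
      using assms(4) by (intro card_chords_end_pt_in[OF lcd]) (auto dest: start_bound)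
    finally show ?thesis using assms(4) by simp
  qed
  show ?thesis
    using card_filter_eq_diff[OF linear_chord_diagram_finite[OF lcd], of "\<lambda>c. start_pt c \<in> M n k"]
      card_filter_eq_diff[OF linear_chord_diagram_finite[OF lcd], of "\<lambda>c. end_pt c \<in> M n k"]
    unfolding starts ends linear_chord_diagram_card[OF lcd] by blast
qed

end
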